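(* Assume (A1) and (A2). Then for every $\nu$ with $0<\nu<\min(\bar\nu,\tilde\nu)$, $$d:=\inf_{z\in\mathbb{C}_\nu}\sum_{j=1}^{n+1}|r_j(z)|>0.$$
   Context: Setting: $n\in\mathbb{N}_{>0}$; $(A_k)_{k\ge1}$ real $n\times n$ matrices, $(B_j)_{j\ge0}$ real $n\times 1$ matrices with $\sum|A_k|+\sum|B_j|<\infty$; strictly increasing delays $\tau_k\in(0,\tau_*]$, $\theta_j\in[0,\theta_*]$ with $\tau_*,\theta_*>0$; $N\in L^2((0,\tau_* ),\mathbb{R}^{n\times n})$, $M\in L^2((0,\theta_* ),\mathbb{R}^n)$. For $\nu\ge0$, $\mathbb{C}_\nu:=\{z\in\mathbb{C}:\operatorname{Re}z>-\nu\}$. Define $\Delta_0(z):=I_n-\sum_kA_ke^{-\tau_kz}$, $q(z):=\Delta_0(z)-\int_0^{\tau_*}N(\eta)e^{-\eta z}d\eta$, $p(z):=\sum_jB_je^{-\theta_jz}+\int_0^{\theta_*}M(\eta)e^{-\eta z}d\eta$. For $j\in\{1,\dots,n+1\}$, $r_j(z)$ is the determinant of the $n\times n$ matrix obtained from $[q(z),\,-p(z)]$ by deleting column $j$. Assumption (A1): there exist $\tilde\nu>0$, $\eta>0$ with $|\det\Delta_0(z)|>\eta$ for all $z\in\mathbb{C}_{\tilde\nu}$. Assumption (A2): there exists $\bar\nu>0$ with $\operatorname{rank}[q(z),-p(z)]=n$ for all $z\in\mathbb{C}_{\bar\nu}$. *)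

theory Defs
  imports "HOL-Analysis.Analysis" "Jordan_Normal_Form.DL_Rank" "Jordan_Normal_Form.DL_Submatrix"
begin

text \<open>Matrices are Jordan_Normal_Form matrices (type 'a mat) with explicit dimensions.
  Row/column indices are 0-based.\<close>

text \<open>Absolute norm of a matrix: sum of the absolute values of all entries
  (all norms on finite-dimensional spaces are equivalent).\<close>
definition mat_abs_norm :: "real mat \<Rightarrow> real" where
  "mat_abs_norm X = (\<Sum>i<dim_row X. \<Sum>l<dim_col X. \<bar>X $$ (i,l)\<bar>)"

definition L2_on :: "real set \<Rightarrow> (real \<Rightarrow> real) \<Rightarrow> bool" where
  "L2_on S f \<longleftrightarrow> set_borel_measurable lborel S f \<and> set_integrable lborel S (\<lambda>x. (f x)^2)"

definition Delta0 :: "nat \<Rightarrow> (nat \<Rightarrow> real mat) \<Rightarrow> (nat \<Rightarrow> real) \<Rightarrow> complex \<Rightarrow> complex mat" where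
  "Delta0 n A \<tau> z = Matrix.mat n n (\<lambda>(i,l).
      (if i = l then 1 else 0) - (\<Sum>k. complex_of_real (A k $$ (i,l)) * exp (- complex_of_real (\<tau> k) * z)))"

definition qfun :: "nat \<Rightarrow> (nat \<Rightarrow> real mat) \<Rightarrow> (nat \<Rightarrow> real) \<Rightarrow> real \<Rightarrow> (real \<Rightarrow> real mat)
    \<Rightarrow> complex \<Rightarrow> complex mat" where
  "qfun n A \<tau> \<tau>s N z = Matrix.mat n n (\<lambda>(i,l).
      Delta0 n A \<tau> z $$ (i,l)
      - (LINT \<eta>:{0<..<\<tau>s}|lborel. complex_of_real (N \<eta> $$ (i,l)) * exp (- complex_of_real \<eta> * z)))"

definition pfun :: "nat \<Rightarrow> (nat \<Rightarrow> real mat) \<Rightarrow> (nat \<Rightarrow> real) \<Rightarrow> real \<Rightarrow> (real \<Rightarrow> real vec)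
    \<Rightarrow> complex \<Rightarrow> complex mat" where
  "pfun n B \<theta> \<theta>s M z = Matrix.mat n 1 (\<lambda>(i,_).
      (\<Sum>j. complex_of_real (B j $$ (i,0)) * exp (- complex_of_real (\<theta> j) * z))
      + (LINT \<eta>:{0<..<\<theta>s}|lborel. complex_of_real (vec_index (M \<eta>) i) * exp (- complex_of_real \<eta> * z)))"

definition aug_mat :: "nat \<Rightarrow> complex mat \<Rightarrow> complex mat \<Rightarrow> complex mat" where
  "aug_mat n Q P = Matrix.mat n (n+1) (\<lambda>(i,k). if k < n then Q $$ (i,k) else - (P $$ (i,0)))"

text \<open>r_j(z), j in {1..n+1}: determinant of [q(z), -p(z)] with column j (1-based) deleted.\<close>
definition rfun :: "nat \<Rightarrow> (nat \<Rightarrow> real mat) \<Rightarrow> (nat \<Rightarrow> real) \<Rightarrow> real \<Rightarrow> (real \<Rightarrow> real mat)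
    \<Rightarrow> (nat \<Rightarrow> real mat) \<Rightarrow> (nat \<Rightarrow> real) \<Rightarrow> real \<Rightarrow> (real \<Rightarrow> real vec) \<Rightarrow> nat \<Rightarrow> complex \<Rightarrow> complex" where
  "rfun n A \<tau> \<tau>s N B \<theta> \<theta>s M j z =
     Determinant.det (submatrix (aug_mat n (qfun n A \<tau> \<tau>s N z) (pfun n B \<theta> \<theta>s M z))
                        {..<n} ({..<n+1} - {j - 1}))"

end

(* r_(n+1)(z) = det q(z), and det q(z) - det Delta_0(z) tends to 0 as |z| grows in the closed
   half-plane Re z >= -nu: the entries of q - Delta_0 are Laplace transforms of integrable functions
   on a bounded interval (Riemann-Lebesgue), while all entries stay bounded there. By (A1) the sum
   of the |r_j| is therefore at least eta/2 outside a large ball. Inside the ball the half-plane is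
   compact, and the sum is continuous and, by (A2), positive, because a matrix of rank n with n + 1
   columns has a nonzero maximal minor. Hence the sum has a positive lower bound on the closed
   half-plane, which contains C_nu. *)
theory Submission
  imports Defs "Jordan_Normal_Form.DL_Rank_Submatrix"
begin

section \<open>Bounds and limits at infinity\<close>

abbreviation at_infinity_within :: "'a::real_normed_vector set \<Rightarrow> 'a filter" where
  "at_infinity_within S \<equiv> inf at_infinity (principal S)"

lemma Bfun_at_infinity_withinI:
  "(\<And>z. z \<in> S \<Longrightarrow> norm (f z) \<le> K) \<Longrightarrow> Bfun f (at_infinity_within S)"
  by (intro BfunI[where K = K]) (simp add: eventually_inf_principal)

lemma Bfun_prod:
  fixes f :: "'i \<Rightarrow> 'x \<Rightarrow> 'a::real_normed_field"
  assumes "finite I" and "\<And>i. i \<in> I \<Longrightarrow> Bfun (f i) F"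
  shows "Bfun (\<lambda>x. \<Prod>i\<in>I. f i x) F"
  using assms
proof (induction I rule: finite_induct)
  case (insert j I)
  obtain K where "eventually (\<lambda>x. norm (f j x) \<le> K) F"
    using insert.prems[of j] by (auto elim: BfunE)
  moreover obtain L where "eventually (\<lambda>x. norm (\<Prod>i\<in>I. f i x) \<le> L) F"
    using insert.IH insert.prems by (auto elim: BfunE)
  ultimately have "eventually (\<lambda>x. norm (\<Prod>i\<in>insert j I. f i x) \<le> K * L) F"
    by eventually_elim (use insert.hyps in \<open>simp add: norm_mult mult_mono'\<close>)
  then show ?case
    by (rule BfunI)
qed simp

lemma prod_diff_tendsto_0:
  fixes a b :: "'i \<Rightarrow> 'x \<Rightarrow> 'a::real_normed_field"
  assumes "finite I"
    and "\<And>i. i \<in> I \<Longrightarrow> Bfun (a i) F" "\<And>i. i \<in> I \<Longrightarrow> Bfun (b i) F"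
    and "\<And>i. i \<in> I \<Longrightarrow> ((\<lambda>x. a i x - b i x) \<longlongrightarrow> 0) F"
  shows "((\<lambda>x. (\<Prod>i\<in>I. a i x) - (\<Prod>i\<in>I. b i x)) \<longlongrightarrow> 0) F"
  using assms
proof (induction I rule: finite_induct)
  case (insert j I)
  have Zfun_iff: "Zfun f F \<longleftrightarrow> (f \<longlongrightarrow> 0) F" for f :: "'x \<Rightarrow> 'a"
    by (simp add: tendsto_Zfun_iff)
  (* Telescoping: with P, Q the products over I, a_j P - b_j Q = (a_j - b_j) P + b_j (P - Q). *)
  have "Zfun (\<lambda>x. (a j x - b j x) * (\<Prod>i\<in>I. a i x) + b j x * ((\<Prod>i\<in>I. a i x) - (\<Prod>i\<in>I. b i x))) F"
  proof (rule Zfun_add)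
    show "Zfun (\<lambda>x. (a j x - b j x) * (\<Prod>i\<in>I. a i x)) F"
      using insert.prems insert.hyps
      by (intro bounded_bilinear.Zfun_prod_Bfun[OF bounded_bilinear_mult] Bfun_prod)
        (auto simp: Zfun_iff)
    show "Zfun (\<lambda>x. b j x * ((\<Prod>i\<in>I. a i x) - (\<Prod>i\<in>I. b i x))) F"
      using insert.prems insert.IH
      by (intro bounded_bilinear.Bfun_prod_Zfun[OF bounded_bilinear_mult])
        (auto simp: Zfun_iff)
  qed
  then show ?case
    using insert.hyps by (simp add: Zfun_iff algebra_simps)
qed simp

lemma continuous_on_pos_uniform_lower_bound:
  fixes F :: "'a::{real_normed_vector, heine_borel} \<Rightarrow> real"
  assumes S: "closed S" and F: "continuous_on S F" and pos: "\<And>z. z \<in> S \<Longrightarrow> 0 < F z"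
    and c: "0 < c" and large: "eventually (\<lambda>z. c \<le> F z) (at_infinity_within S)"
  shows "\<exists>d>0. \<forall>z\<in>S. d \<le> F z"
proof -
  obtain R where R: "\<And>z. z \<in> S \<Longrightarrow> R \<le> norm z \<Longrightarrow> c \<le> F z"
    using large unfolding eventually_inf_principal eventually_at_infinity by blast
  define K where "K = cball 0 R \<inter> S"
  have K: "compact K"
    unfolding K_def using S by (intro compact_Int_closed compact_cball)
  show ?thesis
  proof (cases "K = {}")
    case True
    then have "c \<le> F z" if "z \<in> S" for z
      using R[OF that] that by (force simp: K_def)
    with c show ?thesis by blast
  next
    case False
    have "K \<subseteq> S"
      by (simp add: K_def)
    then obtain z0 where z0: "z0 \<in> K" "\<And>z. z \<in> K \<Longrightarrow> F z0 \<le> F z"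
      using continuous_attains_inf[OF K False continuous_on_subset[OF F]] by blast
    have "min c (F z0) \<le> F z" if "z \<in> S" for z
      using R[OF that] z0(2)[of z] that by (cases "R \<le> norm z") (auto simp: K_def)
    moreover have "0 < min c (F z0)"
      using c pos z0(1) by (simp add: K_def)
    ultimately show ?thesis
      by blast
  qed
qed

lemma integrable_imp_set_integrable:
  fixes f :: "'a \<Rightarrow> 'b::{banach, second_countable_topology}"
  shows "A \<in> sets M \<Longrightarrow> integrable M f \<Longrightarrow> set_integrable M A f"
  unfolding set_integrable_def by (rule integrable_mult_indicator)

lemma set_integrable_Ioo_indicator:
  assumes "A \<in> sets borel"
  shows "set_integrable lborel {0<..<T} (indicator A :: real \<Rightarrow> real)"
proof -
  have "emeasure lborel ({0<..<T} \<inter> A) \<le> emeasure lborel {0<..<T}"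
    by (rule emeasure_mono) auto
  also have "\<dots> < \<infinity>" by (cases "0 \<le> T") auto
  finally have "integrable lborel (\<lambda>x. indicator ({0<..<T} \<inter> A) x :: real)"
    using assms by (intro integrable_real_indicator) auto
  then show ?thesis
    unfolding set_integrable_def by (simp add: indicator_inter_arith)
qed

lemma abs_le_one_plus_square: "\<bar>y::real\<bar> \<le> 1 + y\<^sup>2"
proof -
  have "0 \<le> (\<bar>y\<bar> - 1)\<^sup>2"
    by simp
  then show ?thesis
    by (simp add: power2_diff)
qed

lemma L2_on_imp_set_integrable:
  assumes "L2_on S f" "S \<in> sets lborel" "emeasure lborel S < \<infinity>"
  shows "set_integrable lborel S f"
proof (rule set_integrable_bound)
  have "set_integrable lborel S (\<lambda>_. 1 :: real)"
    using assms(2,3) by (simp add: set_integrable_def)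
  then show "set_integrable lborel S (\<lambda>x. 1 + (f x)\<^sup>2)"
    using assms(1) unfolding L2_on_def by (intro set_integral_add) auto
  show "set_borel_measurable lborel S f"
    using assms(1) by (simp add: L2_on_def)
  show "AE x in lborel. x \<in> S \<longrightarrow> norm (f x) \<le> norm (1 + (f x)\<^sup>2)"
    using abs_le_one_plus_square by (intro AE_I2) (simp add: add_increasing)
qed

lemma set_integral_abs_diff_dominated_tendsto_0:
  fixes s :: "nat \<Rightarrow> 'a \<Rightarrow> real"
  assumes s: "\<And>m. set_integrable M A (s m)" and h: "set_integrable M A h"
    and w: "set_integrable M A w"
    and lim: "\<And>x. x \<in> A \<Longrightarrow> (\<lambda>m. s m x) \<longlonglongrightarrow> h x"
    and bound: "\<And>m x. x \<in> A \<Longrightarrow> \<bar>s m x\<bar> \<le> w x"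
  shows "(\<lambda>m. LINT x:A|M. \<bar>h x - s m x\<bar>) \<longlonglongrightarrow> 0"
proof -
  have "(\<lambda>m. integral\<^sup>L M (\<lambda>x. indicator A x *\<^sub>R \<bar>h x - s m x\<bar>)) \<longlonglongrightarrow> integral\<^sup>L M (\<lambda>x. 0)"
  proof (rule integral_dominated_convergence[where w = "\<lambda>x. indicator A x *\<^sub>R (\<bar>h x\<bar> + w x)"])
    show "integrable M (\<lambda>x. indicator A x *\<^sub>R (\<bar>h x\<bar> + w x))"
      using set_integral_add(1)[OF set_integrable_abs[OF h] w] unfolding set_integrable_def .
    fix m
    have "(\<lambda>x. \<bar>indicator A x *\<^sub>R h x - indicator A x *\<^sub>R s m x\<bar>) \<in> borel_measurable M"
      using h s[of m] unfolding set_integrable_def by measurable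
    then show "(\<lambda>x. indicator A x *\<^sub>R \<bar>h x - s m x\<bar>) \<in> borel_measurable M"
      by (rule measurable_cong[THEN iffD1, rotated]) (simp add: indicator_def)
    show "AE x in M. norm (indicator A x *\<^sub>R \<bar>h x - s m x\<bar>) \<le> indicator A x *\<^sub>R (\<bar>h x\<bar> + w x)"
      using bound by (intro AE_I2)
        (auto simp: indicator_def intro: order.trans[OF abs_triangle_ineq4] add_left_mono)
  next
    show "AE x in M. (\<lambda>m. indicator A x *\<^sub>R \<bar>h x - s m x\<bar>) \<longlonglongrightarrow> 0"
    proof (intro AE_I2)
      fix x
      show "(\<lambda>m. indicator A x *\<^sub>R \<bar>h x - s m x\<bar>) \<longlonglongrightarrow> 0"
      proof (cases "x \<in> A")
        case True
        have "(\<lambda>m. \<bar>h x - s m x\<bar>) \<longlonglongrightarrow> \<bar>h x - h x\<bar>"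
          by (intro tendsto_intros lim True)
        then show ?thesis using True by simp
      qed simp
    qed
  qed simp
  then show ?thesis unfolding set_lebesgue_integral_def by simp
qed

section \<open>Laplace transforms over a bounded interval\<close>

definition trunc_laplace :: "real \<Rightarrow> (real \<Rightarrow> real) \<Rightarrow> complex \<Rightarrow> complex" where
  "trunc_laplace T h z = (LINT x:{0<..<T}|lborel. complex_of_real (h x) * exp (- complex_of_real x * z))"

lemma norm_exp_neg_mult_le:
  assumes "0 \<le> \<nu>" "-\<nu> \<le> Re z" "0 \<le> x" "x \<le> T"
  shows "cmod (exp (- complex_of_real x * z)) \<le> exp (\<nu> * T)"
proof -
  have "- x * Re z \<le> x * \<nu>" using assms mult_left_mono[of "-Re z" \<nu> x] by simp
  also have "\<dots> \<le> T * \<nu>" using assms by (simp add: mult_right_mono)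
  finally show ?thesis by (simp add: norm_exp_eq_Re mult.commute)
qed

lemma norm_laplace_integrand_le:
  assumes "0 \<le> \<nu>" "-\<nu> \<le> Re z" "x \<in> {0<..<T}"
  shows "cmod (complex_of_real (h x) * exp (- complex_of_real x * z)) \<le> exp (\<nu> * T) * \<bar>h x\<bar>"
  using norm_exp_neg_mult_le[of \<nu> z x T] assms
  by (simp add: norm_mult mult.commute mult_left_mono)

lemma set_borel_measurable_laplace_integrand:
  assumes "set_integrable lborel {0<..<T} h"
  shows "set_borel_measurable lborel {0<..<T}
           (\<lambda>x. complex_of_real (h x) * exp (- complex_of_real x * z))"
proof -
  have "(\<lambda>x. indicator {0<..<T} x *\<^sub>R h x) \<in> borel_measurable lborel"
    using assms unfolding set_integrable_def by auto
  then have "(\<lambda>x. complex_of_real (indicator {0<..<T} x *\<^sub>R h x) * exp (- complex_of_real x * z))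
               \<in> borel_measurable lborel"
    by measurable
  moreover have "(\<lambda>x. complex_of_real (indicator {0<..<T} x *\<^sub>R h x) * exp (- complex_of_real x * z))
    = (\<lambda>x. indicator {0<..<T} x *\<^sub>R (complex_of_real (h x) * exp (- complex_of_real x * z)))"
    by (auto simp: indicator_def fun_eq_iff)
  ultimately show ?thesis
    unfolding set_borel_measurable_def by simp
qed

lemma set_integrable_laplace_integrand:
  assumes h: "set_integrable lborel {0<..<T} h" and "0 \<le> \<nu>" "-\<nu> \<le> Re z"
  shows "set_integrable lborel {0<..<T} (\<lambda>x. complex_of_real (h x) * exp (- complex_of_real x * z))"
proof (rule set_integrable_bound)
  show "set_integrable lborel {0<..<T} (\<lambda>x. exp (\<nu> * T) * h x)"
    using h by (rule set_integrable_mult_right)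
  show "AE x in lborel. x \<in> {0<..<T} \<longrightarrow>
          cmod (complex_of_real (h x) * exp (- complex_of_real x * z)) \<le> norm (exp (\<nu> * T) * h x)"
    using norm_laplace_integrand_le[OF assms(2,3)] by (simp add: abs_mult)
qed (rule set_borel_measurable_laplace_integrand[OF h])

lemma norm_trunc_laplace_le:
  assumes h: "set_integrable lborel {0<..<T} h" and "0 \<le> \<nu>" "-\<nu> \<le> Re z"
  shows "cmod (trunc_laplace T h z) \<le> exp (\<nu> * T) * (LINT x:{0<..<T}|lborel. \<bar>h x\<bar>)"
proof -
  have "cmod (trunc_laplace T h z)
          \<le> (LINT x:{0<..<T}|lborel. cmod (complex_of_real (h x) * exp (- complex_of_real x * z)))"
    unfolding trunc_laplace_def
    by (rule set_integral_norm_bound[OF set_integrable_laplace_integrand[OF assms]])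
  also have "\<dots> \<le> (LINT x:{0<..<T}|lborel. exp (\<nu> * T) * \<bar>h x\<bar>)"
    using set_integrable_laplace_integrand[OF assms] h norm_laplace_integrand_le[OF assms(2,3)]
    by (intro set_integral_mono set_integrable_norm set_integrable_mult_right set_integrable_abs)
  finally show ?thesis by simp
qed

lemma trunc_laplace_add:
  assumes "set_integrable lborel {0<..<T} h" "set_integrable lborel {0<..<T} g" "0 \<le> \<nu>" "-\<nu> \<le> Re z"
  shows "trunc_laplace T (\<lambda>x. h x + g x) z = trunc_laplace T h z + trunc_laplace T g z"
  unfolding trunc_laplace_def
  using set_integrable_laplace_integrand[OF assms(1,3,4)] set_integrable_laplace_integrand[OF assms(2,3,4)]
  by (subst set_integral_add(2)[symmetric]) (auto simp: algebra_simps)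

lemma trunc_laplace_diff:
  assumes "set_integrable lborel {0<..<T} h" "set_integrable lborel {0<..<T} g" "0 \<le> \<nu>" "-\<nu> \<le> Re z"
  shows "trunc_laplace T (\<lambda>x. h x - g x) z = trunc_laplace T h z - trunc_laplace T g z"
  unfolding trunc_laplace_def
  using set_integrable_laplace_integrand[OF assms(1,3,4)] set_integrable_laplace_integrand[OF assms(2,3,4)]
  by (subst set_integral_diff(2)[symmetric]) (auto simp: algebra_simps)

lemma trunc_laplace_sum:
  assumes "\<And>i. i \<in> I \<Longrightarrow> set_integrable lborel {0<..<T} (h i)" "0 \<le> \<nu>" "-\<nu> \<le> Re z"
  shows "trunc_laplace T (\<lambda>x. \<Sum>i\<in>I. h i x) z = (\<Sum>i\<in>I. trunc_laplace T (h i) z)"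
  using assms(1)
proof (induction I rule: infinite_finite_induct)
  case (insert i I)
  have "set_integrable lborel {0<..<T} (\<lambda>x. \<Sum>i\<in>I. h i x)"
    using insert.prems unfolding set_integrable_def scaleR_sum_right
    by (intro Bochner_Integration.integrable_sum) auto
  then have "trunc_laplace T (\<lambda>x. h i x + (\<Sum>i\<in>I. h i x)) z
               = trunc_laplace T (h i) z + trunc_laplace T (\<lambda>x. \<Sum>i\<in>I. h i x) z"
    using insert.prems by (intro trunc_laplace_add[OF _ _ assms(2,3)]) auto
  with insert show ?case by simp
qed (simp_all add: trunc_laplace_def)

lemma trunc_laplace_cmult: "trunc_laplace T (\<lambda>x. c * h x) z = c * trunc_laplace T h z"
  unfolding trunc_laplace_def by (subst set_integral_mult_right[symmetric]) (simp add: algebra_simps)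

lemma trunc_laplace_zero [simp]: "trunc_laplace T (\<lambda>_. 0) = (\<lambda>_. 0)"
  by (simp add: trunc_laplace_def[abs_def])

lemma trunc_laplace_cong:
  "(\<And>x. x \<in> {0<..<T} \<Longrightarrow> h x = g x) \<Longrightarrow> trunc_laplace T h = trunc_laplace T g"
  unfolding trunc_laplace_def by (intro ext set_lebesgue_integral_cong) auto

lemma trunc_laplace_continuous_on:
  assumes h: "set_integrable lborel {0<..<T} h" and "0 \<le> \<nu>"
  shows "continuous_on {z. -\<nu> \<le> Re z} (trunc_laplace T h)"
  unfolding continuous_on_sequentially
proof (intro allI ballI impI)
  fix u :: "nat \<Rightarrow> complex" and a
  assume "a \<in> {z. -\<nu> \<le> Re z}" and u: "(\<forall>m. u m \<in> {z. -\<nu> \<le> Re z}) \<and> u \<longlonglongrightarrow> a"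
  let ?f = "\<lambda>z x. indicator {0<..<T} x *\<^sub>R (complex_of_real (h x) * exp (- complex_of_real x * z))"
  show "(trunc_laplace T h \<circ> u) \<longlonglongrightarrow> trunc_laplace T h a"
    unfolding comp_def trunc_laplace_def set_lebesgue_integral_def
  proof (rule integral_dominated_convergence)
    show "integrable lborel (\<lambda>x. indicator {0<..<T} x *\<^sub>R (exp (\<nu> * T) * \<bar>h x\<bar>))"
      using h unfolding set_integrable_def[symmetric] by (intro set_integrable_mult_right set_integrable_abs)
    show "AE x in lborel. (\<lambda>m. ?f (u m) x) \<longlonglongrightarrow> ?f a x"
      using u by (intro AE_I2 tendsto_intros) auto
    show "AE x in lborel. norm (?f (u m) x) \<le> indicator {0<..<T} x *\<^sub>R (exp (\<nu> * T) * \<bar>h x\<bar>)" for m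
      using norm_laplace_integrand_le[OF assms(2)] u by (intro AE_I2) (simp add: indicator_def)
  qed (use set_borel_measurable_laplace_integrand[OF h] in \<open>simp_all add: set_borel_measurable_def\<close>)
qed

(* Riemann-Lebesgue lemma on a closed half-plane: explicit for indicators of half-lines, then
   Borel sets by Dynkin's argument, then integrable functions by dominated approximation. *)
lemma trunc_laplace_indicator_atMost_eq:
  assumes b: "0 < b" "b \<le> T" and z: "z \<noteq> 0"
  shows "trunc_laplace T (indicator {..b}) z = (1 - exp (- complex_of_real b * z)) / z"
proof -
  have "trunc_laplace T (indicator {..b}) z = (LINT x:{0<..b}|lborel. exp (- complex_of_real x * z))"
    unfolding trunc_laplace_def set_lebesgue_integral_def
  proof (rule integral_cong_AE)
    show "AE x in lborel. indicator {0<..<T} x *\<^sub>R (complex_of_real (indicator {..b} x) * exp (- complex_of_real x * z))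
            = indicator {0<..b} x *\<^sub>R exp (- complex_of_real x * z)"
      using AE_lborel_singleton[of b] by eventually_elim (use b in \<open>auto simp: indicator_def\<close>)
  qed measurable
  also have "\<dots> = (LBINT x=ereal 0..ereal b. exp (- complex_of_real x * z))"
    using b by (simp add: interval_integral_Ioc)
  also have "\<dots> = - exp (- complex_of_real b * z) / z - (- exp (- complex_of_real 0 * z) / z)"
  proof (rule interval_integral_FTC_finite)
    fix x :: real
    have "((\<lambda>w. - exp (- w * z) / z) has_field_derivative exp (- complex_of_real x * z)) (at (complex_of_real x))"
      using z by (auto intro!: derivative_eq_intros simp: field_simps)
    then show "((\<lambda>x. - exp (- complex_of_real x * z) / z) has_vector_derivative exp (- complex_of_real x * z))
        (at x within {min 0 b..max 0 b})"
      by (rule has_vector_derivative_real_field)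
  qed (intro continuous_intros)
  also have "\<dots> = (1 - exp (- complex_of_real b * z)) / z"
    by (simp add: diff_divide_distrib)
  finally show ?thesis .
qed

lemma trunc_laplace_indicator_atMost_tendsto_0:
  assumes nu: "0 \<le> \<nu>"
  shows "(trunc_laplace T (indicator {..a}) \<longlongrightarrow> 0) (at_infinity_within {z. -\<nu> \<le> Re z})"
proof -
  define b where "b = min a T"
  have eq: "trunc_laplace T (indicator {..a}) = trunc_laplace T (indicator {..b})"
    by (rule trunc_laplace_cong) (auto simp: b_def indicator_def)
  show ?thesis
  proof (cases "0 < b")
    case False
    then have "trunc_laplace T (indicator {..b}) = trunc_laplace T (\<lambda>_. 0)"
      by (intro trunc_laplace_cong) (auto simp: indicator_def)
    then show ?thesis by (simp add: eq)
  next
    case True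
    have "((\<lambda>z. inverse z) \<longlongrightarrow> 0) (at_infinity_within {z. -\<nu> \<le> Re z})"
      using tendsto_inverse_0 by (rule tendsto_mono[rotated]) simp
    moreover have "eventually (\<lambda>z. cmod (trunc_laplace T (indicator {..b}) z)
                     \<le> cmod (inverse z) * (1 + exp (\<nu> * T))) (at_infinity_within {z. -\<nu> \<le> Re z})"
      unfolding eventually_inf_principal eventually_at_infinity
    proof (intro exI[of _ 1] allI impI)
      fix z :: complex assume "1 \<le> cmod z" and z: "z \<in> {z. -\<nu> \<le> Re z}"
      then have "z \<noteq> 0" by auto
      have "cmod (exp (- complex_of_real b * z)) \<le> exp (\<nu> * T)"
        using True z nu by (intro norm_exp_neg_mult_le) (auto simp: b_def)
      moreover have "cmod (1 - exp (- complex_of_real b * z)) \<le> 1 + cmod (exp (- complex_of_real b * z))"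
        by (metis norm_one norm_triangle_ineq4)
      ultimately have "cmod (1 - exp (- complex_of_real b * z)) \<le> 1 + exp (\<nu> * T)"
        by linarith
      then show "cmod (trunc_laplace T (indicator {..b}) z) \<le> cmod (inverse z) * (1 + exp (\<nu> * T))"
        using \<open>z \<noteq> 0\<close> True
        by (simp add: trunc_laplace_indicator_atMost_eq b_def norm_divide divide_simps mult.commute)
    qed
    ultimately show ?thesis
      unfolding eq by (rule tendsto_0_le)
  qed
qed

lemma trunc_laplace_tendsto_0_dominated_limit:
  fixes s :: "nat \<Rightarrow> real \<Rightarrow> real"
  assumes h: "set_integrable lborel {0<..<T} h" and w: "set_integrable lborel {0<..<T} w"
    and nu: "0 \<le> \<nu>"
    and s: "\<And>m. set_integrable lborel {0<..<T} (s m)"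
    and lim: "\<And>x. x \<in> {0<..<T} \<Longrightarrow> (\<lambda>m. s m x) \<longlonglongrightarrow> h x"
    and bound: "\<And>m x. x \<in> {0<..<T} \<Longrightarrow> \<bar>s m x\<bar> \<le> w x"
    and s_tendsto: "\<And>m. (trunc_laplace T (s m) \<longlongrightarrow> 0) (at_infinity_within {z. -\<nu> \<le> Re z})"
  shows "(trunc_laplace T h \<longlongrightarrow> 0) (at_infinity_within {z. -\<nu> \<le> Re z})"
proof (rule tendstoI)
  fix e :: real assume e: "e > 0"
  have "(\<lambda>m. exp (\<nu> * T) * (LINT x:{0<..<T}|lborel. \<bar>h x - s m x\<bar>)) \<longlonglongrightarrow> exp (\<nu> * T) * 0"
    by (intro tendsto_mult_left set_integral_abs_diff_dominated_tendsto_0[OF s h w lim bound])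
  then have "eventually (\<lambda>m. exp (\<nu> * T) * (LINT x:{0<..<T}|lborel. \<bar>h x - s m x\<bar>) < e/2) sequentially"
    by (rule order_tendstoD(2)) (use e in simp)
  then obtain m where m: "exp (\<nu> * T) * (LINT x:{0<..<T}|lborel. \<bar>h x - s m x\<bar>) < e/2"
    unfolding eventually_sequentially by blast
  have "eventually (\<lambda>z. cmod (trunc_laplace T (s m) z) < e/2 \<and> -\<nu> \<le> Re z)
          (at_infinity_within {z. -\<nu> \<le> Re z})"
    using tendstoD[OF s_tendsto[of m], of "e/2"] e
    by (auto simp: eventually_inf_principal elim: eventually_mono)
  then show "eventually (\<lambda>z. dist (trunc_laplace T h z) 0 < e) (at_infinity_within {z. -\<nu> \<le> Re z})"
  proof eventually_elim
    case (elim z)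
    have hs: "set_integrable lborel {0<..<T} (\<lambda>x. h x - s m x)"
      using h s[of m] by (rule set_integral_diff)
    have "trunc_laplace T h z = trunc_laplace T (\<lambda>x. h x - s m x) z + trunc_laplace T (s m) z"
      using trunc_laplace_diff[OF h s nu] elim by simp
    also have "cmod \<dots> \<le> exp (\<nu> * T) * (LINT x:{0<..<T}|lborel. \<bar>h x - s m x\<bar>)
                           + cmod (trunc_laplace T (s m) z)"
      using norm_trunc_laplace_le[OF hs nu] elim by (intro order.trans[OF norm_triangle_ineq] add_right_mono) auto
    finally show ?case using m elim by simp
  qed
qed

lemma trunc_laplace_indicator_tendsto_0:
  assumes A: "A \<in> sets borel" and nu: "0 \<le> \<nu>"
  shows "(trunc_laplace T (indicator A) \<longlongrightarrow> 0) (at_infinity_within {z. -\<nu> \<le> Re z})"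
proof -
  have "Int_stable (range (atMost :: real \<Rightarrow> real set))"
    by (auto simp: Int_stable_def intro!: image_eqI[where x = "min _ _"])
  moreover have "range atMost \<subseteq> Pow UNIV"
    by simp
  moreover have "A \<in> sigma_sets UNIV (range atMost)"
    using A by (simp add: borel_eq_atMost sets_measure_of)
  ultimately show ?thesis
  proof (induction rule: sigma_sets_induct_disjoint)
    case (basic A)
    then show ?case using trunc_laplace_indicator_atMost_tendsto_0[OF nu] by auto
  next
    case empty
    show ?case by simp
  next
    case (compl A)
    have A: "A \<in> sets borel"
      using compl(1) by (simp add: borel_eq_atMost sets_measure_of)
    have "((\<lambda>z. trunc_laplace T (indicator {..T}) z - trunc_laplace T (indicator A) z) \<longlongrightarrow> 0)
                     (at_infinity_within {z. -\<nu> \<le> Re z})"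
      using tendsto_diff[OF trunc_laplace_indicator_atMost_tendsto_0[OF nu] compl(2)] by simp
    moreover have "eventually (\<lambda>z. trunc_laplace T (indicator {..T}) z - trunc_laplace T (indicator A) z
            = trunc_laplace T (indicator (UNIV - A)) z) (at_infinity_within {z. -\<nu> \<le> Re z})"
    proof (intro eventually_inf_principal[THEN iffD2] always_eventually allI impI)
      fix z assume "z \<in> {z. -\<nu> \<le> Re z}"
      then have "trunc_laplace T (\<lambda>x. indicator {..T} x - indicator A x) z
                   = trunc_laplace T (indicator {..T}) z - trunc_laplace T (indicator A) z"
        using A nu by (intro trunc_laplace_diff set_integrable_Ioo_indicator) auto
      moreover have "trunc_laplace T (\<lambda>x. indicator {..T} x - indicator A x)
                       = trunc_laplace T (indicator (UNIV - A))"
        by (rule trunc_laplace_cong) (auto simp: indicator_def)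
      ultimately show "trunc_laplace T (indicator {..T}) z - trunc_laplace T (indicator A) z
                         = trunc_laplace T (indicator (UNIV - A)) z"
        by simp
    qed
    ultimately show ?case
      by (rule Lim_transform_eventually)
  next
    case (union A)
    have A: "A i \<in> sets borel" for i
      using union(2) by (auto simp: borel_eq_atMost sets_measure_of)
    have disj: "disjoint_family_on A {..<m}" for m
      using union(1) by (rule disjoint_family_on_mono[rotated]) simp
    define s where "s m x = (\<Sum>i<m. indicator (A i) x :: real)" for m x
    have s_eq: "s m = indicator (\<Union>i<m. A i)" for m
      unfolding s_def by (simp add: indicator_UN_disjoint[OF _ disj] fun_eq_iff)
    have h: "set_integrable lborel {0<..<T} (indicator (\<Union>i. A i) :: real \<Rightarrow> real)"
      by (rule set_integrable_Ioo_indicator) (use A in auto)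
    have w: "set_integrable lborel {0<..<T} (\<lambda>_. 1 :: real)"
      using set_integrable_Ioo_indicator[of UNIV T] by simp
    have s_int: "set_integrable lborel {0<..<T} (s m)" for m
      unfolding s_eq by (rule set_integrable_Ioo_indicator) (use A in auto)
    have lim: "(\<lambda>m. s m x) \<longlonglongrightarrow> indicator (\<Union>i. A i) x" for x
      using indicator_sums[of A x] union(1) unfolding s_def sums_def disjoint_family_on_def by auto
    have bound: "\<bar>s m x\<bar> \<le> 1" for m x
      unfolding s_eq by simp
    have "(trunc_laplace T (s m) \<longlongrightarrow> 0) (at_infinity_within {z. -\<nu> \<le> Re z})" for m
    proof -
      have "((\<lambda>z. \<Sum>i<m. trunc_laplace T (indicator (A i)) z) \<longlongrightarrow> 0)
              (at_infinity_within {z. -\<nu> \<le> Re z})"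
        by (intro tendsto_null_sum union(3))
      moreover have "eventually (\<lambda>z. (\<Sum>i<m. trunc_laplace T (indicator (A i)) z) = trunc_laplace T (s m) z)
                       (at_infinity_within {z. -\<nu> \<le> Re z})"
        unfolding eventually_inf_principal s_def
        using A nu by (intro always_eventually allI impI trunc_laplace_sum[symmetric]
            set_integrable_Ioo_indicator) auto
      ultimately show ?thesis
        by (rule Lim_transform_eventually)
    qed
    then show ?case
      by (rule trunc_laplace_tendsto_0_dominated_limit[OF h w nu s_int lim bound])
  qed
qed

lemma trunc_laplace_tendsto_0:
  assumes h: "set_integrable lborel {0<..<T} h" and nu: "0 \<le> \<nu>"
  shows "(trunc_laplace T h \<longlongrightarrow> 0) (at_infinity_within {z. -\<nu> \<le> Re z})"
proof -
  have "(trunc_laplace T f \<longlongrightarrow> 0) (at_infinity_within {z. -\<nu> \<le> Re z})" if "integrable lborel f" for f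
    using that
  proof (induction rule: integrable_induct)
    case (base A c)
    have "((\<lambda>z. c * trunc_laplace T (indicator A) z) \<longlongrightarrow> 0) (at_infinity_within {z. -\<nu> \<le> Re z})"
      using base by (intro tendsto_mult_right_zero trunc_laplace_indicator_tendsto_0 nu) auto
    then show ?case
      using trunc_laplace_cmult[of T c "indicator A"] by (simp add: mult.commute)
  next
    case (add f g)
    have "eventually (\<lambda>z. trunc_laplace T f z + trunc_laplace T g z = trunc_laplace T (\<lambda>x. f x + g x) z)
            (at_infinity_within {z. -\<nu> \<le> Re z})"
      unfolding eventually_inf_principal using add.hyps nu
      by (intro always_eventually allI impI trunc_laplace_add[symmetric] integrable_imp_set_integrable)
        auto
    with tendsto_add_zero[OF add.IH] show ?case
      by (rule Lim_transform_eventually)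
  next
    case (lim f s)
    have f: "set_integrable lborel {0<..<T} f" and s: "set_integrable lborel {0<..<T} (s m)" for m
      using lim.hyps by (auto intro: integrable_imp_set_integrable)
    have w: "set_integrable lborel {0<..<T} (\<lambda>x. 2 * \<bar>f x\<bar>)"
      using f by (intro set_integrable_mult_right set_integrable_abs)
    have "\<bar>s m x\<bar> \<le> 2 * \<bar>f x\<bar>" for m x
      using lim.hyps(3)[of x m] by simp
    with lim.hyps(2) show ?case
      by (intro trunc_laplace_tendsto_0_dominated_limit[OF f w nu s _ _ lim.IH]) auto
  qed
  moreover have "trunc_laplace T (\<lambda>x. indicator {0<..<T} x *\<^sub>R h x) = trunc_laplace T h"
    by (rule trunc_laplace_cong) simp
  ultimately show ?thesis
    using h unfolding set_integrable_def by metis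
qed

section \<open>Dirichlet series\<close>

definition dirichlet_series :: "(nat \<Rightarrow> real) \<Rightarrow> (nat \<Rightarrow> real) \<Rightarrow> complex \<Rightarrow> complex" where
  "dirichlet_series c t z = (\<Sum>k. complex_of_real (c k) * exp (- complex_of_real (t k) * z))"

lemma norm_dirichlet_series_term_le:
  assumes "0 \<le> t k" "t k \<le> T" "0 \<le> \<nu>" "-\<nu> \<le> Re z"
  shows "cmod (complex_of_real (c k) * exp (- complex_of_real (t k) * z)) \<le> \<bar>c k\<bar> * exp (\<nu> * T)"
  using norm_exp_neg_mult_le[OF assms(3,4,1,2)] by (simp add: norm_mult mult_left_mono)

lemma norm_dirichlet_series_le:
  assumes c: "summable (\<lambda>k. \<bar>c k\<bar>)" and t: "\<And>k. 0 \<le> t k \<and> t k \<le> T"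
    and "0 \<le> \<nu>" "-\<nu> \<le> Re z"
  shows "cmod (dirichlet_series c t z) \<le> (\<Sum>k. \<bar>c k\<bar>) * exp (\<nu> * T)"
proof -
  have "cmod (dirichlet_series c t z) \<le> (\<Sum>k. \<bar>c k\<bar> * exp (\<nu> * T))"
    unfolding dirichlet_series_def
    using t assms(3,4) by (intro norm_suminf_le summable_mult2 c norm_dirichlet_series_term_le) auto
  also have "\<dots> = (\<Sum>k. \<bar>c k\<bar>) * exp (\<nu> * T)"
    by (rule suminf_mult2[symmetric, OF c])
  finally show ?thesis .
qed

lemma dirichlet_series_continuous_on:
  assumes c: "summable (\<lambda>k. \<bar>c k\<bar>)" and t: "\<And>k. 0 \<le> t k \<and> t k \<le> T" and "0 \<le> \<nu>"
  shows "continuous_on {z. -\<nu> \<le> Re z} (dirichlet_series c t)"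
proof -
  have "uniform_limit {z. -\<nu> \<le> Re z}
          (\<lambda>m z. \<Sum>k<m. complex_of_real (c k) * exp (- complex_of_real (t k) * z))
          (dirichlet_series c t) sequentially"
    unfolding dirichlet_series_def[abs_def]
    using t assms(3)
    by (intro Weierstrass_m_test[where M = "\<lambda>k. \<bar>c k\<bar> * exp (\<nu> * T)"]
        summable_mult2[OF c] norm_dirichlet_series_term_le) auto
  then show ?thesis
    by (rule uniform_limit_theorem[rotated]) (auto intro!: always_eventually continuous_intros)
qed

section \<open>Determinants and maximal minors\<close>

lemma det_diff_tendsto_0:
  fixes D E :: "'x \<Rightarrow> 'a::real_normed_field mat"
  assumes D: "\<And>x. D x \<in> carrier_mat m m" and E: "\<And>x. E x \<in> carrier_mat m m"
    and "\<And>i j. i < m \<Longrightarrow> j < m \<Longrightarrow> Bfun (\<lambda>x. D x $$ (i,j)) F"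
    and "\<And>i j. i < m \<Longrightarrow> j < m \<Longrightarrow> Bfun (\<lambda>x. E x $$ (i,j)) F"
    and "\<And>i j. i < m \<Longrightarrow> j < m \<Longrightarrow> ((\<lambda>x. D x $$ (i,j) - E x $$ (i,j)) \<longlongrightarrow> 0) F"
  shows "((\<lambda>x. det (D x) - det (E x)) \<longlongrightarrow> 0) F"
proof -
  have "((\<lambda>x. \<Sum>p | p permutes {0..<m}. of_int (sign p) *
          ((\<Prod>i=0..<m. D x $$ (i, p i)) - (\<Prod>i=0..<m. E x $$ (i, p i)))) \<longlongrightarrow> 0) F"
  proof (intro tendsto_null_sum tendsto_mult_right_zero prod_diff_tendsto_0)
    fix p i assume "p \<in> {p. p permutes {0..<m}}" "i \<in> {0..<m}"
    then have "i < m" "p i < m"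
      using permutes_in_image[of p "{0..<m}" i] by auto
    with assms(3-5) show "Bfun (\<lambda>x. D x $$ (i, p i)) F" "Bfun (\<lambda>x. E x $$ (i, p i)) F"
      "((\<lambda>x. D x $$ (i, p i) - E x $$ (i, p i)) \<longlongrightarrow> 0) F"
      by auto
  qed simp
  then show ?thesis
    by (simp add: det_def'[OF D] det_def'[OF E] sum_subtractf[symmetric] right_diff_distrib)
qed

lemma det_continuous_on:
  fixes X :: "'x::topological_space \<Rightarrow> 'a::real_normed_field mat"
  assumes X: "\<And>z. z \<in> S \<Longrightarrow> X z \<in> carrier_mat m m"
    and "\<And>i j. i < m \<Longrightarrow> j < m \<Longrightarrow> continuous_on S (\<lambda>z. X z $$ (i,j))"
  shows "continuous_on S (\<lambda>z. det (X z))"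
proof -
  have "continuous_on S (\<lambda>z. \<Sum>p | p permutes {0..<m}. of_int (sign p) * (\<Prod>i=0..<m. X z $$ (i, p i)))"
  proof (intro continuous_on_sum continuous_on_mult continuous_on_const continuous_on_prod)
    fix p i assume "p \<in> {p. p permutes {0..<m}}" "i \<in> {0..<m}"
    then show "continuous_on S (\<lambda>z. X z $$ (i, p i))"
      using permutes_in_image[of p "{0..<m}" i] assms(2) by auto
  qed
  then show ?thesis
    by (rule continuous_on_cong[THEN iffD1, rotated 2]) (auto simp: det_def'[OF X])
qed

lemma submatrix_det_continuous_on:
  fixes X :: "'x::topological_space \<Rightarrow> 'a::real_normed_field mat"
  assumes X: "\<And>z. z \<in> S \<Longrightarrow> X z \<in> carrier_mat r c"
    and cont: "\<And>i k. i < r \<Longrightarrow> k < c \<Longrightarrow> continuous_on S (\<lambda>z. X z $$ (i,k))"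
    and I: "card {i. i < r \<and> i \<in> I} = m" and J: "card {k. k < c \<and> k \<in> J} = m"
  shows "continuous_on S (\<lambda>z. det (submatrix (X z) I J))"
proof (rule det_continuous_on)
  show "submatrix (X z) I J \<in> carrier_mat m m" if "z \<in> S" for z
    using carrier_matD[OF X[OF that]] I J by (intro carrier_matI) (simp_all only: dim_submatrix)
  fix i k assume "i < m" "k < m"
  then have i: "i < card {i. i < r \<and> i \<in> I}" and k: "k < card {k. k < c \<and> k \<in> J}"
    using I J by simp_all
  have "continuous_on S (\<lambda>z. X z $$ (pick I i, pick J k))"
    using cont[OF pick_le[OF i] pick_le[OF k]] .
  moreover have "X z $$ (pick I i, pick J k) = submatrix (X z) I J $$ (i, k)" if "z \<in> S" for z
    using carrier_matD[OF X[OF that]] i k by (simp only: submatrix_index)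
  ultimately show "continuous_on S (\<lambda>z. submatrix (X z) I J $$ (i, k))"
    by (rule continuous_on_eq)
qed

lemma pick_lessThan:
  assumes "i < n"
  shows "pick {..<n} i = i"
proof -
  have "{a \<in> {..<n}. a < i} = {..<i}"
    using assms by auto
  then show ?thesis
    using pick_card_in_set[of i "{..<n}"] assms by simp
qed

lemma submatrix_lessThan_dim_row: "submatrix X {..<dim_row X} J = submatrix X UNIV J"
  unfolding submatrix_def by (rule eq_matI) (auto simp: pick_lessThan pick_UNIV)

lemma col_submatrix_UNIV:
  assumes "k < card {j. j < dim_col X \<and> j \<in> J}"
  shows "col (submatrix X UNIV J) k = col X (pick J k)"
proof (rule eq_vecI)
  fix i assume "i < dim_vec (col X (pick J k))"
  then show "col (submatrix X UNIV J) k $ i = col X (pick J k) $ i"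
    using assms pick_le[OF assms] by (simp add: submatrix_index dim_submatrix pick_UNIV)
qed (simp add: dim_submatrix)

lemma col_mem_cols_submatrix_UNIV:
  assumes "j \<in> J" "j < dim_col X"
  shows "col X j \<in> set (cols (submatrix X UNIV J))"
proof -
  define k where "k = card {a \<in> J. a < j}"
  have "{a \<in> J. a < j} \<subset> {a. a < dim_col X \<and> a \<in> J}"
    using assms by auto
  then have k: "k < card {a. a < dim_col X \<and> a \<in> J}"
    unfolding k_def by (intro psubset_card_mono) auto
  have "col X j = col (submatrix X UNIV J) k"
    using col_submatrix_UNIV[OF k] pick_card_in_set[OF assms(1)] by (simp add: k_def)
  then show ?thesis
    using k by (force simp: cols_def dim_submatrix)
qed

(* A maximal independent set of columns has n elements, so it misses some column j; deleting
   column j leaves an n x n matrix of rank n. *)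
lemma (in vec_space) maximal_minor_nonzero:
  assumes X: "X \<in> carrier_mat n (Suc n)" and rank: "rank X = n"
  obtains j where "j < Suc n" "det (submatrix X UNIV ({..<Suc n} - {j})) \<noteq> 0"
proof -
  obtain S where S: "maximal S (\<lambda>T. T \<subseteq> set (cols X) \<and> lin_indpt T)"
    using maximal_exists[of "\<lambda>T. T \<subseteq> set (cols X) \<and> lin_indpt T" "card (set (cols X))" "{}"]
    by (meson List.finite_set card_mono empty_iff empty_subsetI finite_lin_indpt2 rev_finite_subset)
  have card_S: "card S = n"
    using rank_card_indpt[OF X S] rank by simp
  have indpt: "lin_indpt S" and S_cols: "S \<subseteq> set (cols X)"
    using S by (auto simp: maximal_def)
  have "set (cols X) = col X ` {..<Suc n}"
    using X by (metis cols_def list.set_map set_upt atLeast0LessThan carrier_matD(2))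
  with S_cols obtain U where U: "U \<subseteq> {..<Suc n}" "inj_on (col X) U" "S = col X ` U"
    by (auto simp: subset_image_inj)
  have "card U = n"
    using card_image[OF U(2)] U(3) card_S by simp
  then have "U \<noteq> {..<Suc n}"
    by (metis card_lessThan n_not_Suc_n)
  with U(1) obtain j where j: "j < Suc n" "j \<notin> U"
    by blast
  define Y where "Y = submatrix X UNIV ({..<Suc n} - {j})"
  have "card {i. i < dim_row X \<and> i \<in> UNIV} = n"
    using X by simp
  moreover have "{i. i < dim_col X \<and> i \<in> {..<Suc n} - {j}} = {..<Suc n} - {j}"
    using X by auto
  ultimately have Y: "Y \<in> carrier_mat n n"
    unfolding Y_def using j(1) by (intro carrier_matI) (simp_all add: dim_submatrix)
  have "S \<subseteq> set (cols Y)"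
  proof
    fix s assume "s \<in> S"
    then obtain i where i: "i \<in> U" "s = col X i"
      using U(3) by blast
    have "col X i \<in> set (cols Y)"
      unfolding Y_def using i(1) U(1) j(2) X by (intro col_mem_cols_submatrix_UNIV) auto
    then show "s \<in> set (cols Y)"
      using i(2) by simp
  qed
  then have "n \<le> rank Y"
    using rank_ge_card_indpt[OF Y _ indpt] card_S by simp
  then have "rank Y = n"
    using rank_le_nc[OF Y] by simp
  with that j det_rank_iff[OF Y] show thesis
    by (simp add: Y_def)
qed

lemma sum_norm_maximal_minors_pos:
  fixes X :: "'a::real_normed_field mat"
  assumes X: "X \<in> carrier_mat n (Suc n)" and rank: "vec_space.rank n X = n"
  shows "0 < (\<Sum>j=1..n+1. norm (det (submatrix X {..<n} ({..<n+1} - {j - 1}))))"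
proof -
  obtain j where j: "j < Suc n" "det (submatrix X UNIV ({..<Suc n} - {j})) \<noteq> 0"
    using vec_space.maximal_minor_nonzero[OF X rank] .
  have "submatrix X {..<n} = submatrix X UNIV"
    using X submatrix_lessThan_dim_row[of X] by (auto simp: fun_eq_iff)
  with j show ?thesis
    by (intro sum_pos2[where i = "j + 1"]) auto
qed

lemma summable_abs_index:
  assumes "\<And>k. X k \<in> carrier_mat r c" "i < r" "l < c" "summable (\<lambda>k. mat_abs_norm (X k))"
  shows "summable (\<lambda>k. \<bar>X k $$ (i,l)\<bar>)"
proof (rule summable_comparison_test[OF _ assms(4)])
  have "\<bar>X k $$ (i,l)\<bar> \<le> mat_abs_norm (X k)" for k
  proof -
    have "\<bar>X k $$ (i,l)\<bar> \<le> (\<Sum>l'<c. \<bar>X k $$ (i,l')\<bar>)"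
      using assms(3) by (intro member_le_sum) auto
    also have "\<dots> \<le> (\<Sum>i'<r. \<Sum>l'<c. \<bar>X k $$ (i',l')\<bar>)"
      using assms(2) by (intro member_le_sum[where f = "\<lambda>i'. \<Sum>l'<c. \<bar>X k $$ (i',l')\<bar>"] sum_nonneg) auto
    finally show ?thesis
      using assms(1)[of k] by (simp add: mat_abs_norm_def)
  qed
  then show "\<exists>N. \<forall>k\<ge>N. norm \<bar>X k $$ (i, l)\<bar> \<le> mat_abs_norm (X k)"
    by simp
qed

section \<open>The matrices of the delay system\<close>

lemma Delta0_carrier [simp]: "Delta0 n A \<tau> z \<in> carrier_mat n n"
  by (simp add: Delta0_def)

lemma qfun_carrier [simp]: "qfun n A \<tau> \<tau>s N z \<in> carrier_mat n n"
  by (simp add: qfun_def)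

lemma aug_mat_carrier [simp]: "aug_mat n Q P \<in> carrier_mat n (Suc n)"
  by (simp add: aug_mat_def)

lemma Delta0_index:
  "i < n \<Longrightarrow> l < n \<Longrightarrow>
    Delta0 n A \<tau> z $$ (i,l) = (if i = l then 1 else 0) - dirichlet_series (\<lambda>k. A k $$ (i,l)) \<tau> z"
  by (simp add: Delta0_def dirichlet_series_def)

lemma qfun_index:
  "i < n \<Longrightarrow> l < n \<Longrightarrow>
    qfun n A \<tau> \<tau>s N z $$ (i,l) = Delta0 n A \<tau> z $$ (i,l) - trunc_laplace \<tau>s (\<lambda>x. N x $$ (i,l)) z"
  by (simp add: qfun_def trunc_laplace_def)

lemma pfun_index:
  "i < n \<Longrightarrow>
    pfun n B \<theta> \<theta>s M z $$ (i,0)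
      = dirichlet_series (\<lambda>j. B j $$ (i,0)) \<theta> z + trunc_laplace \<theta>s (\<lambda>x. M x $ i) z"
  by (simp add: pfun_def trunc_laplace_def dirichlet_series_def)

lemma aug_mat_index:
  "i < n \<Longrightarrow> k < Suc n \<Longrightarrow> aug_mat n Q P $$ (i,k) = (if k < n then Q $$ (i,k) else - P $$ (i,0))"
  by (simp add: aug_mat_def)

lemma submatrix_aug_mat_lessThan:
  assumes Q: "Q \<in> carrier_mat n n"
  shows "submatrix (aug_mat n Q P) {..<n} {..<n} = Q"
proof -
  have "{i. i < n \<and> i \<in> {..<n}} = {..<n}" "{k. k < Suc n \<and> k \<in> {..<n}} = {..<n}"
    by auto
  then have rows: "card {i. i < dim_row (aug_mat n Q P) \<and> i \<in> {..<n}} = n"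
    and cols: "card {k. k < dim_col (aug_mat n Q P) \<and> k \<in> {..<n}} = n"
    by (simp_all add: aug_mat_def)
  show ?thesis
  proof (rule eq_matI)
    fix i k assume "i < dim_row Q" "k < dim_col Q"
    then have "i < n" "k < n"
      using Q by simp_all
    then show "submatrix (aug_mat n Q P) {..<n} {..<n} $$ (i, k) = Q $$ (i, k)"
      using rows cols by (simp add: submatrix_index pick_lessThan aug_mat_index)
  qed (use Q rows cols in \<open>simp_all add: dim_submatrix\<close>)
qed

lemma rfun_last: "rfun n A \<tau> \<tau>s N B \<theta> \<theta>s M (n+1) z = det (qfun n A \<tau> \<tau>s N z)"
proof -
  have "{..<n+1} - {n + 1 - 1} = {..<n}"
    by auto
  then show ?thesis
    by (simp add: rfun_def submatrix_aug_mat_lessThan)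
qed

lemma sum_norm_rfun_pos:
  assumes "vec_space.rank n (aug_mat n (qfun n A \<tau> \<tau>s N z) (pfun n B \<theta> \<theta>s M z)) = n"
  shows "0 < (\<Sum>j=1..n+1. cmod (rfun n A \<tau> \<tau>s N B \<theta> \<theta>s M j z))"
  unfolding rfun_def by (rule sum_norm_maximal_minors_pos[OF aug_mat_carrier assms])

locale delay_system =
  fixes n :: nat
    and A :: "nat \<Rightarrow> real mat" and \<tau> :: "nat \<Rightarrow> real" and \<tau>s :: real
    and B :: "nat \<Rightarrow> real mat" and \<theta> :: "nat \<Rightarrow> real" and \<theta>s :: real
    and N :: "real \<Rightarrow> real mat" and M :: "real \<Rightarrow> real vec"
  assumes A_summable: "\<And>i l. i < n \<Longrightarrow> l < n \<Longrightarrow> summable (\<lambda>k. \<bar>A k $$ (i,l)\<bar>)"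
    and \<tau>_range: "\<And>k. 0 \<le> \<tau> k \<and> \<tau> k \<le> \<tau>s"
    and N_integrable: "\<And>i l. i < n \<Longrightarrow> l < n \<Longrightarrow> set_integrable lborel {0<..<\<tau>s} (\<lambda>x. N x $$ (i,l))"
    and B_summable: "\<And>i. i < n \<Longrightarrow> summable (\<lambda>j. \<bar>B j $$ (i,0)\<bar>)"
    and \<theta>_range: "\<And>j. 0 \<le> \<theta> j \<and> \<theta> j \<le> \<theta>s"
    and M_integrable: "\<And>i. i < n \<Longrightarrow> set_integrable lborel {0<..<\<theta>s} (\<lambda>x. M x $ i)"
begin

lemma norm_Delta0_index_le:
  assumes "i < n" "l < n" "0 \<le> \<nu>" "-\<nu> \<le> Re z"
  shows "cmod (Delta0 n A \<tau> z $$ (i,l)) \<le> 1 + (\<Sum>k. \<bar>A k $$ (i,l)\<bar>) * exp (\<nu> * \<tau>s)"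
proof -
  have "cmod (Delta0 n A \<tau> z $$ (i,l))
          \<le> cmod (if i = l then 1 else 0 :: complex) + cmod (dirichlet_series (\<lambda>k. A k $$ (i,l)) \<tau> z)"
    unfolding Delta0_index[OF assms(1,2)] by (rule norm_triangle_ineq4)
  also have "\<dots> \<le> 1 + (\<Sum>k. \<bar>A k $$ (i,l)\<bar>) * exp (\<nu> * \<tau>s)"
    using norm_dirichlet_series_le[where t = \<tau>, OF A_summable[OF assms(1,2)] \<tau>_range assms(3,4)]
    by (intro add_mono) auto
  finally show ?thesis .
qed

lemma Delta0_index_continuous_on:
  assumes "i < n" "l < n" "0 \<le> \<nu>"
  shows "continuous_on {z. -\<nu> \<le> Re z} (\<lambda>z. Delta0 n A \<tau> z $$ (i,l))"
  unfolding Delta0_index[OF assms(1,2)]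
  using dirichlet_series_continuous_on[where t = \<tau>, OF A_summable[OF assms(1,2)] \<tau>_range assms(3)]
  by (intro continuous_intros)

lemma aug_mat_index_continuous_on:
  assumes "i < n" "k < Suc n" "0 \<le> \<nu>"
  shows "continuous_on {z. -\<nu> \<le> Re z}
           (\<lambda>z. aug_mat n (qfun n A \<tau> \<tau>s N z) (pfun n B \<theta> \<theta>s M z) $$ (i,k))"
proof (cases "k < n")
  case True
  then show ?thesis
    unfolding aug_mat_index[OF assms(1,2)] qfun_index[OF assms(1) True]
    using Delta0_index_continuous_on[OF assms(1) True assms(3)]
      trunc_laplace_continuous_on[OF N_integrable[OF assms(1) True] assms(3)]
    by (simp add: continuous_on_diff)
next
  case False
  then show ?thesis
    unfolding aug_mat_index[OF assms(1,2)] pfun_index[OF assms(1)]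
    using dirichlet_series_continuous_on[where t = \<theta>, OF B_summable[OF assms(1)] \<theta>_range assms(3)]
      trunc_laplace_continuous_on[OF M_integrable[OF assms(1)] assms(3)]
    by (simp add: continuous_on_diff continuous_on_minus)
qed

lemma rfun_continuous_on:
  assumes "j \<in> {1..n+1}" "0 \<le> \<nu>"
  shows "continuous_on {z. -\<nu> \<le> Re z} (rfun n A \<tau> \<tau>s N B \<theta> \<theta>s M j)"
proof -
  have "{i. i < n \<and> i \<in> {..<n}} = {..<n}"
    by auto
  moreover have "{k. k < Suc n \<and> k \<in> {..<n+1} - {j - 1}} = {..<n+1} - {j - 1}"
    by auto
  moreover have "card ({..<n+1} - {j - 1}) = n"
    using assms(1) by (subst card_Diff_singleton) auto
  ultimately have rows: "card {i. i < n \<and> i \<in> {..<n}} = n"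
    and cols: "card {k. k < Suc n \<and> k \<in> {..<n+1} - {j - 1}} = n"
    by simp_all
  have "continuous_on {z. -\<nu> \<le> Re z} (\<lambda>z. det (submatrix
               (aug_mat n (qfun n A \<tau> \<tau>s N z) (pfun n B \<theta> \<theta>s M z)) {..<n} ({..<n+1} - {j - 1})))"
    by (rule submatrix_det_continuous_on[OF _ aug_mat_index_continuous_on[OF _ _ assms(2)] rows cols])
      (rule aug_mat_carrier)
  then show ?thesis
    by (simp add: rfun_def[abs_def])
qed

lemma det_Delta0_minus_det_qfun_tendsto_0:
  assumes "0 \<le> \<nu>"
  shows "((\<lambda>z. det (Delta0 n A \<tau> z) - det (qfun n A \<tau> \<tau>s N z)) \<longlongrightarrow> 0)
           (at_infinity_within {z. -\<nu> \<le> Re z})"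
proof (rule det_diff_tendsto_0[OF Delta0_carrier qfun_carrier])
  fix i l assume il: "i < n" "l < n"
  let ?LN = "trunc_laplace \<tau>s (\<lambda>x. N x $$ (i,l))"
  have N_bound: "cmod (?LN z) \<le> exp (\<nu> * \<tau>s) * (LINT x:{0<..<\<tau>s}|lborel. \<bar>N x $$ (i,l)\<bar>)"
    if "-\<nu> \<le> Re z" for z
    using norm_trunc_laplace_le[OF N_integrable[OF il] assms that] .
  show "Bfun (\<lambda>z. Delta0 n A \<tau> z $$ (i,l)) (at_infinity_within {z. -\<nu> \<le> Re z})"
    using norm_Delta0_index_le[OF il assms] by (intro Bfun_at_infinity_withinI) auto
  show "Bfun (\<lambda>z. qfun n A \<tau> \<tau>s N z $$ (i,l)) (at_infinity_within {z. -\<nu> \<le> Re z})"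
  proof (intro Bfun_at_infinity_withinI)
    fix z assume "z \<in> {z. -\<nu> \<le> Re z}"
    then show "norm (qfun n A \<tau> \<tau>s N z $$ (i,l))
        \<le> 1 + (\<Sum>k. \<bar>A k $$ (i,l)\<bar>) * exp (\<nu> * \<tau>s)
          + exp (\<nu> * \<tau>s) * (LINT x:{0<..<\<tau>s}|lborel. \<bar>N x $$ (i,l)\<bar>)"
      unfolding qfun_index[OF il]
      using norm_Delta0_index_le[OF il assms] N_bound
      by (intro order.trans[OF norm_triangle_ineq4] add_mono) auto
  qed
  show "((\<lambda>z. Delta0 n A \<tau> z $$ (i,l) - qfun n A \<tau> \<tau>s N z $$ (i,l)) \<longlongrightarrow> 0)
          (at_infinity_within {z. -\<nu> \<le> Re z})"
    unfolding qfun_index[OF il] using trunc_laplace_tendsto_0[OF N_integrable[OF il] assms]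
    by simp
qed

theorem sum_norm_rfun_uniform_lower_bound:
  assumes \<nu>: "0 \<le> \<nu>" and \<eta>: "0 < \<eta>"
    and Delta0: "\<And>z. -\<nu> \<le> Re z \<Longrightarrow> \<eta> < cmod (det (Delta0 n A \<tau> z))"
    and rank: "\<And>z. -\<nu> \<le> Re z \<Longrightarrow>
                 vec_space.rank n (aug_mat n (qfun n A \<tau> \<tau>s N z) (pfun n B \<theta> \<theta>s M z)) = n"
  obtains d where "0 < d"
    "\<And>z. -\<nu> \<le> Re z \<Longrightarrow> d \<le> (\<Sum>j=1..n+1. cmod (rfun n A \<tau> \<tau>s N B \<theta> \<theta>s M j z))"
proof -
  let ?H = "{z. -\<nu> \<le> Re z}"
  let ?F = "\<lambda>z. \<Sum>j=1..n+1. cmod (rfun n A \<tau> \<tau>s N B \<theta> \<theta>s M j z)"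
  have "eventually (\<lambda>z. cmod (det (Delta0 n A \<tau> z) - det (qfun n A \<tau> \<tau>s N z)) < \<eta>/2 \<and> z \<in> ?H)
          (at_infinity_within ?H)"
    using tendstoD[OF det_Delta0_minus_det_qfun_tendsto_0[OF \<nu>], of "\<eta>/2"] \<eta>
    by (auto simp: eventually_inf_principal dist_norm elim: eventually_mono)
  then have large: "eventually (\<lambda>z. \<eta>/2 \<le> ?F z) (at_infinity_within ?H)"
  proof eventually_elim
    case (elim z)
    then have "\<eta>/2 \<le> cmod (det (qfun n A \<tau> \<tau>s N z))"
      using Delta0[of z] norm_triangle_ineq2[of "det (Delta0 n A \<tau> z)" "det (qfun n A \<tau> \<tau>s N z)"]
      by auto
    also have "\<dots> = cmod (rfun n A \<tau> \<tau>s N B \<theta> \<theta>s M (n+1) z)"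
      by (simp only: rfun_last)
    also have "\<dots> \<le> ?F z"
      by (rule member_le_sum) auto
    finally show ?case .
  qed
  have closed: "closed ?H"
    by (intro closed_Collect_le continuous_intros)
  have cont: "continuous_on ?H ?F"
    using rfun_continuous_on[OF _ \<nu>] by (intro continuous_intros) auto
  have pos: "0 < ?F z" if "z \<in> ?H" for z
    using rank that by (intro sum_norm_rfun_pos) auto
  have "0 < \<eta>/2"
    using \<eta> by simp
  with continuous_on_pos_uniform_lower_bound[OF closed cont pos _ large] that show thesis
    by auto
qed

end

lemma delay_systemI:
  assumes "\<And>k. A k \<in> carrier_mat n n" "\<And>j. B j \<in> carrier_mat n 1"
    and "summable (\<lambda>k. mat_abs_norm (A k))" "summable (\<lambda>j. mat_abs_norm (B j))"
    and "0 < \<tau>s" "0 < \<theta>s" "\<And>k. 0 \<le> \<tau> k \<and> \<tau> k \<le> \<tau>s" "\<And>j. 0 \<le> \<theta> j \<and> \<theta> j \<le> \<theta>s"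
    and "\<And>i l. i < n \<Longrightarrow> l < n \<Longrightarrow> L2_on {0<..<\<tau>s} (\<lambda>x. N x $$ (i,l))"
    and "\<And>i. i < n \<Longrightarrow> L2_on {0<..<\<theta>s} (\<lambda>x. vec_index (M x) i)"
  shows "delay_system n A \<tau> \<tau>s B \<theta> \<theta>s N M"
proof
  show "summable (\<lambda>k. \<bar>A k $$ (i,l)\<bar>)" if "i < n" "l < n" for i l
    using assms(1) that assms(3) by (rule summable_abs_index)
  show "summable (\<lambda>j. \<bar>B j $$ (i,0)\<bar>)" if "i < n" for i
    using assms(2) that _ assms(4) by (rule summable_abs_index) simp
  show "set_integrable lborel {0<..<\<tau>s} (\<lambda>x. N x $$ (i,l))" if "i < n" "l < n" for i l
    using assms(9)[OF that] assms(5) by (intro L2_on_imp_set_integrable) auto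
  show "set_integrable lborel {0<..<\<theta>s} (\<lambda>x. M x $ i)" if "i < n" for i
    using assms(10)[OF that] assms(6) by (intro L2_on_imp_set_integrable) auto
qed (use assms(7,8) in auto)

theorem lemma4:
  fixes n :: nat
    and A :: "nat \<Rightarrow> real mat" and \<tau> :: "nat \<Rightarrow> real" and \<tau>s :: real
    and B :: "nat \<Rightarrow> real mat" and \<theta> :: "nat \<Rightarrow> real" and \<theta>s :: real
    and N :: "real \<Rightarrow> real mat" and M :: "real \<Rightarrow> real vec"
    and \<nu>t \<eta> \<nu>b :: real
  assumes n_pos: "n > 0"
    and A_dim: "\<And>k. A k \<in> carrier_mat n n"
    and B_dim: "\<And>j. B j \<in> carrier_mat n 1"
    and AB_summable: "summable (\<lambda>k. mat_abs_norm (A k))" "summable (\<lambda>j. mat_abs_norm (B j))"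
    and \<tau>s_pos: "\<tau>s > 0" and \<theta>s_pos: "\<theta>s > 0"
    and \<tau>_mono: "strict_mono \<tau>" and \<tau>_range: "\<And>k. 0 < \<tau> k \<and> \<tau> k \<le> \<tau>s"
    and \<theta>_mono: "strict_mono \<theta>" and \<theta>_range: "\<And>j. 0 \<le> \<theta> j \<and> \<theta> j \<le> \<theta>s"
    and N_dim: "\<And>x. N x \<in> carrier_mat n n"
    and N_L2: "\<And>i l. i < n \<Longrightarrow> l < n \<Longrightarrow> L2_on {0<..<\<tau>s} (\<lambda>x. N x $$ (i,l))"
    and M_dim: "\<And>x. M x \<in> carrier_vec n"
    and M_L2: "\<And>i. i < n \<Longrightarrow> L2_on {0<..<\<theta>s} (\<lambda>x. vec_index (M x) i)"
    and A1: "\<nu>t > 0" "\<eta> > 0"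
            "\<And>z. Re z > - \<nu>t \<Longrightarrow> cmod (Determinant.det (Delta0 n A \<tau> z)) > \<eta>"
    and A2: "\<nu>b > 0"
            "\<And>z. Re z > - \<nu>b \<Longrightarrow>
               vec_space.rank n
                 (aug_mat n (qfun n A \<tau> \<tau>s N z) (pfun n B \<theta> \<theta>s M z)) = n"
  shows "\<And>\<nu>. 0 < \<nu> \<Longrightarrow> \<nu> < min \<nu>b \<nu>t \<Longrightarrow>
           (INF z\<in>{z. Re z > - \<nu>}. \<Sum>j=1..n+1. cmod (rfun n A \<tau> \<tau>s N B \<theta> \<theta>s M j z)) > 0"
proof -
  fix \<nu> :: real
  assume \<nu>: "0 < \<nu>" "\<nu> < min \<nu>b \<nu>t"
  interpret delay_system n A \<tau> \<tau>s B \<theta> \<theta>s N M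
    using A_dim B_dim AB_summable \<tau>s_pos \<theta>s_pos \<tau>_range \<theta>_range N_L2 M_L2
    by (intro delay_systemI) (auto intro: less_imp_le)
  have "\<eta> < cmod (det (Delta0 n A \<tau> z))" if "-\<nu> \<le> Re z" for z
    using A1(3) that \<nu> by simp
  moreover have "vec_space.rank n (aug_mat n (qfun n A \<tau> \<tau>s N z) (pfun n B \<theta> \<theta>s M z)) = n"
    if "-\<nu> \<le> Re z" for z
    using A2(2) that \<nu> by simp
  ultimately obtain d where "0 < d"
    and d: "\<And>z. -\<nu> \<le> Re z \<Longrightarrow> d \<le> (\<Sum>j=1..n+1. cmod (rfun n A \<tau> \<tau>s N B \<theta> \<theta>s M j z))"
    using sum_norm_rfun_uniform_lower_bound[of \<nu> \<eta>] \<nu>(1) A1(2) by auto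
  have "d \<le> (INF z\<in>{z. Re z > - \<nu>}. \<Sum>j=1..n+1. cmod (rfun n A \<tau> \<tau>s N B \<theta> \<theta>s M j z))"
    using \<nu>(1) d by (intro cINF_greatest) (auto intro: exI[of _ 0])
  with \<open>0 < d\<close> show "(INF z\<in>{z. Re z > - \<nu>}. \<Sum>j=1..n+1. cmod (rfun n A \<tau> \<tau>s N B \<theta> \<theta>s M j z)) > 0"
    by linarith
qed

end
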